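(* For every $d \in \{2,3,4,5,8,12,16,17,24,32,40,48,80,112\}$, the sequence $\left(\left\lfloor n^8/d \right\rfloor\right)_{n \ge 1}$ is eventually prime-free.
   Context: A sequence $(a_n)_{n\ge 1}$ of positive integers is called eventually prime-free if there exists an index $n_0$ such that $a_n$ is composite for all $n \ge n_0$. (Here, as in the paper, this is understood as: only finitely many terms $a_n$ are prime.) *)

theory Defs
  imports Complex_Main "HOL-Computational_Algebra.Primes"
begin

definition eventually_prime_free :: "(nat \<Rightarrow> nat) \<Rightarrow> bool" where
  "eventually_prime_free a \<longleftrightarrow> finite {n. n \<ge> 1 \<and> prime (a n)}"

end

theory Submission
  imports Defs
begin

text \<open>Let \<open>b = n\<^sup>8 mod 2d\<close>. If \<open>b < d\<close>, then \<open>\<lfloor>n\<^sup>8/d\<rfloor>\<close> is even. If instead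
  \<open>b mod d = t\<^sup>2\<close> with \<open>t \<le> 9\<close>, then \<open>d \<lfloor>n\<^sup>8/d\<rfloor> = (n\<^sup>4 - t)(n\<^sup>4 + t)\<close> with both factors
  exceeding \<open>d\<close> once \<open>n > d + 9\<close>, so \<open>\<lfloor>n\<^sup>8/d\<rfloor>\<close> is not prime. Since \<open>b\<close> only depends on
  \<open>n mod 2d\<close>, it is a finite computation to check that for each listed \<open>d\<close> one of the two
  cases always occurs.\<close>

lemma not_prime_if_mult_eq_large_factors:
  fixes d q a b :: nat
  assumes prod: "d * q = a * b" and "d < a" "d < b"
  shows "\<not> prime q"
proof
  assume "prime q"
  have "q dvd a * b"
    using prod by (metis dvd_triv_right)
  then have "q dvd a \<or> q dvd b"
    using \<open>prime q\<close> by (simp add: prime_dvd_mult_iff)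
  then show False
  proof
    assume "q dvd a"
    then obtain k where "a = q * k" ..
    with prod \<open>prime q\<close> have "d = k * b"
      by (simp add: prime_gt_0_nat)
    with \<open>d < a\<close> \<open>d < b\<close> \<open>a = q * k\<close> show False
      by (cases k) auto
  next
    assume "q dvd b"
    then obtain k where "b = q * k" ..
    with prod \<open>prime q\<close> have "d = a * k"
      by (simp add: prime_gt_0_nat ac_simps)
    with \<open>d < a\<close> \<open>d < b\<close> \<open>b = q * k\<close> show False
      by (cases k) auto
  qed
qed

lemma not_prime_div_if_square_mod:
  fixes m d t :: nat
  assumes sq: "m\<^sup>2 mod d = t\<^sup>2" and large: "d + t < m"
  shows "\<not> prime (m\<^sup>2 div d)"
proof -
  have "d * (m\<^sup>2 div d) + t\<^sup>2 = m\<^sup>2"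
    using div_mult_mod_eq[of "m\<^sup>2" d] sq by (simp add: ac_simps)
  also have "m\<^sup>2 = (m - t) * (m + t) + t\<^sup>2"
  proof -
    obtain s where "m = t + s"
      using large le_Suc_ex[of t m] by auto
    then show ?thesis
      by (simp add: power2_eq_square algebra_simps)
  qed
  finally have "d * (m\<^sup>2 div d) = (m - t) * (m + t)"
    by simp
  then show ?thesis
    by (rule not_prime_if_mult_eq_large_factors) (use large in auto)
qed

lemma even_div_if_mod_double_less:
  fixes x d :: nat
  assumes "x mod (2 * d) < d"
  shows "even (x div d)"
proof (rule ccontr)
  assume "odd (x div d)"
  then have "x mod (d * 2) = d + x mod d"
    by (simp add: mod_mult2_eq odd_iff_mod_2_eq_one)
  with assms show False
    by (simp add: mult.commute)
qed

definition composite_residue :: "nat \<Rightarrow> nat \<Rightarrow> bool" where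
  "composite_residue d b \<longleftrightarrow> b < d \<or> (\<exists>t\<le>9. b mod d = t\<^sup>2)"

lemma not_prime_eighth_power_div:
  fixes d n :: nat
  assumes residue: "composite_residue d (n ^ 8 mod (2 * d))" and large: "d + 9 < n"
  shows "\<not> prime (n ^ 8 div d)"
  using residue unfolding composite_residue_def
proof (elim disjE exE conjE)
  assume low: "n ^ 8 mod (2 * d) < d"
  have "3 * d \<le> n ^ 2"
    using large by (simp add: power2_eq_square mult_le_mono)
  also have "n ^ 2 \<le> n ^ 8"
    using large by (intro power_increasing) auto
  finally have "3 \<le> n ^ 8 div d"
    using low by (simp add: less_eq_div_iff_mult_less_eq mult.commute)
  then show ?thesis
    using even_div_if_mod_double_less[OF low] prime_odd_nat by fastforce
next
  fix t
  assume "t \<le> 9" and "n ^ 8 mod (2 * d) mod d = t\<^sup>2"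
  then have t: "(n ^ 4)\<^sup>2 mod d = t\<^sup>2"
    by (simp add: mod_mod_cancel flip: power_mult)
  have "n \<le> n ^ 4"
    using large by (simp add: self_le_power)
  with t \<open>t \<le> 9\<close> large show ?thesis
    using not_prime_div_if_square_mod[of "n ^ 4" d t] by (simp flip: power_mult)
qed

lemma composite_residue_iff:
  "composite_residue d b \<longleftrightarrow> b < d \<or> b mod d \<in> {0, 1, 4, 9, 16, 25, 36, 49, 64, 81}"
proof -
  have "{..9::nat} = {0, 1, 2, 3, 4, 5, 6, 7, 8, 9}"
    by auto
  then have "(\<lambda>t. t\<^sup>2) ` {..9::nat} = {0, 1, 4, 9, 16, 25, 36, 49, 64, 81}"
    by simp
  then show ?thesis
    unfolding composite_residue_def by (metis atMost_iff image_iff)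
qed

lemma all_nat_less_numeral:
  fixes P :: "nat \<Rightarrow> bool"
  shows "(\<forall>i < numeral k. P i) \<longleftrightarrow> P (pred_numeral k) \<and> (\<forall>i < pred_numeral k. P i)"
  by (simp add: numeral_eq_Suc All_less_Suc)

lemma composite_residues_of_eighth_powers:
  assumes "d \<in> {2, 3, 4, 5, 8, 12, 16, 17, 24, 32, 40, 48, 80, 112}"
  shows "\<forall>r < 2 * d. composite_residue d (r ^ 8 mod (2 * d))"
  using assms
  apply (elim insertE emptyE)
  \<comment> \<open>Expand the quantifier while \<open>composite_residue\<close> is still folded; unfolding it
    first makes simp rework the body under the binder at every step.\<close>
  apply (simp_all add: all_nat_less_numeral)
  apply (simp_all add: composite_residue_iff)
  done

lemma eventually_prime_freeI:
  assumes "\<And>n. N \<le> n \<Longrightarrow> \<not> prime (a n)"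
  shows "eventually_prime_free a"
proof -
  have "{n. n \<ge> 1 \<and> prime (a n)} \<subseteq> {..<N}"
    using assms by (auto simp: not_le[symmetric])
  then show ?thesis
    unfolding eventually_prime_free_def by (rule finite_subset) simp
qed

theorem theorem5:
  fixes d :: nat
  assumes "d \<in> {2,3,4,5,8,12,16,17,24,32,40,48,80,112}"
  shows "eventually_prime_free (\<lambda>n. nat \<lfloor>real (n ^ 8) / real d\<rfloor>)"
proof (rule eventually_prime_freeI)
  fix n
  assume "d + 10 \<le> n"
  have "0 < d"
    using assms by auto
  then have "composite_residue d ((n mod (2 * d)) ^ 8 mod (2 * d))"
    using composite_residues_of_eighth_powers[OF assms] by simp
  then have "\<not> prime (n ^ 8 div d)"
    using \<open>d + 10 \<le> n\<close> by (intro not_prime_eighth_power_div) (simp_all add: power_mod)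
  then show "\<not> prime (nat \<lfloor>real (n ^ 8) / real d\<rfloor>)"
    unfolding floor_divide_of_nat_eq nat_int .
qed

end
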